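(* Let $p\in(0,1)$ be fixed (not depending on $n$) and let $A$ be the adjacency matrix of an Erdős–Rényi graph $ER(n,p)$. Let $T$ be the number of triangles and $S$ the number of connected triples of $A$, and let $C=3T/S$ be its global clustering coefficient. Define \[ \Sigma=3(n-2)\binom{n}{3}p(1-p)\begin{pmatrix}4p^2+\frac{p(1-p)}{n-2} & 2p^3+\frac{p^2(1-p)}{n-2}\\[2pt] 2p^3+\frac{p^2(1-p)}{n-2} & p^4+\frac{p^2(1+p-2p^2)}{3(n-2)}\end{pmatrix}, \] and \[ \sigma_n^2=\frac{1}{\binom{n}{3}^2}\left(\frac{\Sigma_{22}}{p^6}+\frac{\Sigma_{11}}{9p^4}-\frac{2\Sigma_{12}}{3p^5}\right). \] Then, as $n\to\infty$, $C$ is asymptotically distributed as $\mathrm{LogNormal}(\log p,\sigma_n^2)$, in the sense that $(\log C-\log p)/\sigma_n$ converges in distribution to the standard normal $N(0,1)$.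
   Context: $ER(n,p)$: simple undirected graph on $n$ vertices in which each of the $\binom n2$ pairs is an edge independently with probability $p$. A connected triple on vertices $\{i,j,k\}$ is a set of at least two of the three possible edges among them; $S=3T+V$, where $T$ is the number of triangles (closed triples) and $V$ the number of open triples (vertex triples spanning exactly two edges). $\mathrm{LogNormal}(\mu,\sigma^2)$ denotes the law of $e^Z$ with $Z\sim N(\mu,\sigma^2)$. *)

theory Defs
  imports "HOL-Probability.Probability"
begin

text \<open>Vertices of ER(n,p) are 0..n-1. A graph is given by its edge indicator on
  unordered pairs, represented as pairs (i,j) with i < j < n.\<close>

definition vpairs :: "nat \<Rightarrow> (nat \<times> nat) set" where
  "vpairs n = {(i, j). i < j \<and> j < n}"

definition ER :: "nat \<Rightarrow> real \<Rightarrow> (nat \<times> nat \<Rightarrow> bool) pmf" where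
  "ER n p = Pi_pmf (vpairs n) False (\<lambda>_. bernoulli_pmf p)"

definition adj :: "(nat \<times> nat \<Rightarrow> bool) \<Rightarrow> nat \<Rightarrow> nat \<Rightarrow> bool" where
  "adj G i j = (if i < j then G (i, j) else if j < i then G (j, i) else False)"

definition triples :: "nat \<Rightarrow> (nat \<times> nat \<times> nat) set" where
  "triples n = {(i, j, k). i < j \<and> j < k \<and> k < n}"

definition edges_in :: "(nat \<times> nat \<Rightarrow> bool) \<Rightarrow> nat \<Rightarrow> nat \<Rightarrow> nat \<Rightarrow> nat" where
  "edges_in G i j k = of_bool (adj G i j) + of_bool (adj G j k) + of_bool (adj G i k)"

definition triangles :: "nat \<Rightarrow> (nat \<times> nat \<Rightarrow> bool) \<Rightarrow> nat" where
  "triangles n G = card {(i, j, k) \<in> triples n. edges_in G i j k = 3}"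

definition open_triples :: "nat \<Rightarrow> (nat \<times> nat \<Rightarrow> bool) \<Rightarrow> nat" where
  "open_triples n G = card {(i, j, k) \<in> triples n. edges_in G i j k = 2}"

definition conn_triples :: "nat \<Rightarrow> (nat \<times> nat \<Rightarrow> bool) \<Rightarrow> nat" where
  "conn_triples n G = 3 * triangles n G + open_triples n G"

definition clustering :: "nat \<Rightarrow> (nat \<times> nat \<Rightarrow> bool) \<Rightarrow> real" where
  "clustering n G = 3 * real (triangles n G) / real (conn_triples n G)"

definition Sig_pref :: "nat \<Rightarrow> real \<Rightarrow> real" where
  "Sig_pref n p = 3 * (real n - 2) * real (n choose 3) * p * (1 - p)"

definition Sig11 :: "nat \<Rightarrow> real \<Rightarrow> real" where
  "Sig11 n p = Sig_pref n p * (4 * p^2 + p * (1 - p) / (real n - 2))"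

definition Sig12 :: "nat \<Rightarrow> real \<Rightarrow> real" where
  "Sig12 n p = Sig_pref n p * (2 * p^3 + p^2 * (1 - p) / (real n - 2))"

definition Sig22 :: "nat \<Rightarrow> real \<Rightarrow> real" where
  "Sig22 n p = Sig_pref n p * (p^4 + p^2 * (1 + p - 2 * p^2) / (3 * (real n - 2)))"

definition sigma_sq :: "nat \<Rightarrow> real \<Rightarrow> real" where
  "sigma_sq n p = (1 / real (n choose 3) ^ 2) *
     (Sig22 n p / p^6 + Sig11 n p / (9 * p^4) - 2 * Sig12 n p / (3 * p^5))"

end

theory Submission
  imports Defs
begin

(*
  Write every edge indicator as p + x_e with x_e centred.  Expanding the products over
  each vertex triple gives, with m = card (triples n) and D the centred edge count,
    T = m p^3 + p^2 (n - 2) D + U,     S = 3 m p^2 + 2 p (n - 2) D + W,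
  where U and W are sums of products of two or three distinct x_e.  Such products are
  orthogonal, so U and W are O(n^(3/2)) in L^2 while (n - 2) D is of order n^2.  Hence
  C = p (1 + u) / (1 + v) with u, v small, and log C - log p = u - v + O(u^2 + v^2), where
  u - v = (n - 2) D / (3 m p) up to a negligible remainder.  The leading part of sigma_n^2
  is exactly the variance of this linear term, and D is a centred binomial variable, so
  the central limit theorem applies to it; every other term vanishes in probability by
  Chebyshev's inequality, and a Slutsky argument transfers the limit to log C.
*)

definition centered :: "real \<Rightarrow> bool \<Rightarrow> real" where
  "centered p b = of_bool b - p"

lemma finite_vpairs [simp]: "finite (vpairs n)"
  by (rule finite_subset[of _ "{..<n} \<times> {..<n}"]) (auto simp: vpairs_def)

lemma finite_triples [simp]: "finite (triples n)"
  by (rule finite_subset[of _ "{..<n} \<times> {..<n} \<times> {..<n}"]) (auto simp: triples_def)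

lemma integrable_ER [simp]: "integrable (measure_pmf (ER n p)) (f :: _ \<Rightarrow> real)"
  by (rule integrable_measure_pmf_finite) (simp add: ER_def set_Pi_pmf finite_PiE_dflt)

lemma expectation_Pi_pmf_prod:
  fixes g :: "'i \<Rightarrow> 'b \<Rightarrow> real"
  assumes I: "finite I" and g: "\<And>i. i \<in> I \<Longrightarrow> integrable (measure_pmf (Q i)) (g i)"
  shows "measure_pmf.expectation (Pi_pmf I d Q) (\<lambda>\<omega>. \<Prod>i\<in>I. g i (\<omega> i)) =
         (\<Prod>i\<in>I. measure_pmf.expectation (Q i) (g i))"
proof -
  have component: "map_pmf (\<lambda>\<omega>. \<omega> i) (Pi_pmf I d Q) = Q i" if "i \<in> I" for i
    using that I by (simp add: Pi_pmf_component)
  have indep: "prob_space.indep_vars (measure_pmf (Pi_pmf I d Q)) (\<lambda>_. borel) (\<lambda>i \<omega>. g i (\<omega> i)) I"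
    by (rule prob_space.indep_vars_compose2[OF measure_pmf.prob_space_axioms indep_vars_Pi_pmf[OF I]]) auto
  have "measure_pmf.expectation (Pi_pmf I d Q) (\<lambda>\<omega>. \<Prod>i\<in>I. g i (\<omega> i)) =
        (\<Prod>i\<in>I. measure_pmf.expectation (Pi_pmf I d Q) (\<lambda>\<omega>. g i (\<omega> i)))"
  proof (rule prob_space.indep_vars_lebesgue_integral[OF measure_pmf.prob_space_axioms I indep])
    fix i assume "i \<in> I"
    thus "integrable (measure_pmf (Pi_pmf I d Q)) (\<lambda>\<omega>. g i (\<omega> i))"
      using g[of i] component[of i] integrable_map_pmf_eq[of "\<lambda>\<omega>. \<omega> i" "Pi_pmf I d Q" "g i"] by simp
  qed
  also have "\<dots> = (\<Prod>i\<in>I. measure_pmf.expectation (Q i) (g i))"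
  proof (rule prod.cong[OF refl])
    fix i assume "i \<in> I"
    thus "measure_pmf.expectation (Pi_pmf I d Q) (\<lambda>\<omega>. g i (\<omega> i)) = measure_pmf.expectation (Q i) (g i)"
      using component[of i] integral_map_pmf[of "\<lambda>\<omega>. \<omega> i" "Pi_pmf I d Q" "g i"] by simp
  qed
  finally show ?thesis .
qed

lemma expectation_Pi_pmf_prod_centered:
  assumes p: "0 \<le> p" "p \<le> 1" and I: "finite I" and AB: "A \<subseteq> I" "B \<subseteq> I"
  shows "measure_pmf.expectation (Pi_pmf I d (\<lambda>_. bernoulli_pmf p))
           (\<lambda>\<omega>. (\<Prod>i\<in>A. centered p (\<omega> i)) * (\<Prod>i\<in>B. centered p (\<omega> i)))
         = (if A = B then (p * (1 - p)) ^ card A else 0)"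
proof -
  define g where "g i b = (if i \<in> A then centered p b else 1) * (if i \<in> B then centered p b else 1)" for i b
  have factor: "(\<Prod>i\<in>A. centered p (\<omega> i)) * (\<Prod>i\<in>B. centered p (\<omega> i)) = (\<Prod>i\<in>I. g i (\<omega> i))" for \<omega>
    using AB I unfolding g_def prod.distrib
    by (simp add: prod.If_cases Int_absorb1 Int_absorb2 Int_commute)
  have Eg: "measure_pmf.expectation (bernoulli_pmf p) (g i) =
     (if i \<in> A \<and> i \<in> B then p * (1 - p) else if i \<in> A \<or> i \<in> B then 0 else 1)" for i
    using p unfolding g_def centered_def by (auto simp: algebra_simps)
  have "measure_pmf.expectation (Pi_pmf I d (\<lambda>_. bernoulli_pmf p))
          (\<lambda>\<omega>. (\<Prod>i\<in>A. centered p (\<omega> i)) * (\<Prod>i\<in>B. centered p (\<omega> i)))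
      = (\<Prod>i\<in>I. measure_pmf.expectation (bernoulli_pmf p) (g i))"
    unfolding factor by (rule expectation_Pi_pmf_prod[OF I]) (simp add: integrable_measure_pmf_finite)
  also have "\<dots> = (if A = B then (p * (1 - p)) ^ card A else 0)"
  proof (cases "A = B")
    case True
    thus ?thesis using AB I by (simp add: Eg prod.If_cases Int_absorb2 Int_commute)
  next
    case False
    then obtain i where "i \<in> I" "(i \<in> A) \<noteq> (i \<in> B)" using AB by blast
    thus ?thesis using False I by (intro trans[OF prod_zero]) (auto simp: Eg intro!: bexI[of _ i])
  qed
  finally show ?thesis .
qed

lemma expectation_Pi_pmf_square_sum_centered:
  fixes c :: "'j \<Rightarrow> real" and S :: "'j \<Rightarrow> 'i set"
  assumes p: "0 \<le> p" "p \<le> 1" and I: "finite I" and J: "finite J"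
    and S: "\<And>j. j \<in> J \<Longrightarrow> S j \<subseteq> I" and inj: "inj_on S J"
  shows "measure_pmf.expectation (Pi_pmf I d (\<lambda>_. bernoulli_pmf p))
           (\<lambda>\<omega>. (\<Sum>j\<in>J. c j * (\<Prod>i\<in>S j. centered p (\<omega> i)))\<^sup>2)
         = (\<Sum>j\<in>J. (c j)\<^sup>2 * (p * (1 - p)) ^ card (S j))"
proof -
  let ?E = "measure_pmf.expectation (Pi_pmf I d (\<lambda>_. bernoulli_pmf p))"
  let ?X = "\<lambda>j \<omega>. \<Prod>i\<in>S j. centered p (\<omega> i)"
  have square: "(\<Sum>j\<in>J. c j * ?X j \<omega>)\<^sup>2 = (\<Sum>j\<in>J. \<Sum>k\<in>J. c j * c k * (?X j \<omega> * ?X k \<omega>))" for \<omega>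
    by (simp add: power2_eq_square sum_product algebra_simps)
  have integrable: "integrable (measure_pmf (Pi_pmf I d (\<lambda>_. bernoulli_pmf p))) (f :: _ \<Rightarrow> real)" for f
    using I by (intro integrable_measure_pmf_finite) (simp add: set_Pi_pmf finite_PiE_dflt)
  have "?E (\<lambda>\<omega>. (\<Sum>j\<in>J. c j * ?X j \<omega>)\<^sup>2) = (\<Sum>j\<in>J. \<Sum>k\<in>J. c j * c k * ?E (\<lambda>\<omega>. ?X j \<omega> * ?X k \<omega>))"
    unfolding square by (simp add: Bochner_Integration.integral_sum integrable)
  also have "\<dots> = (\<Sum>j\<in>J. \<Sum>k\<in>J. if j = k then (c j)\<^sup>2 * (p * (1 - p)) ^ card (S j) else 0)"
  proof (intro sum.cong refl)
    fix j k assume jk: "j \<in> J" "k \<in> J"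
    have "(S j = S k) = (j = k)" using inj jk by (auto dest: inj_onD)
    thus "c j * c k * ?E (\<lambda>\<omega>. ?X j \<omega> * ?X k \<omega>) = (if j = k then (c j)\<^sup>2 * (p * (1 - p)) ^ card (S j) else 0)"
      using expectation_Pi_pmf_prod_centered[OF p I S[OF jk(1)] S[OF jk(2)]] by (simp add: power2_eq_square)
  qed
  also have "\<dots> = (\<Sum>j\<in>J. (c j)\<^sup>2 * (p * (1 - p)) ^ card (S j))"
    using J by (simp add: sum.delta)
  finally show ?thesis .
qed

lemma expectation_Pi_pmf_square_sum_centered_le:
  fixes c :: "'j \<Rightarrow> real" and S :: "'j \<Rightarrow> 'i set"
  assumes p: "0 \<le> p" "p \<le> 1" and I: "finite I" and J: "finite J"
    and S: "\<And>j. j \<in> J \<Longrightarrow> S j \<subseteq> I" and inj: "inj_on S J"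
  shows "measure_pmf.expectation (Pi_pmf I d (\<lambda>_. bernoulli_pmf p))
           (\<lambda>\<omega>. (\<Sum>j\<in>J. c j * (\<Prod>i\<in>S j. centered p (\<omega> i)))\<^sup>2) \<le> (\<Sum>j\<in>J. (c j)\<^sup>2)"
proof -
  have "0 \<le> p * (1 - p)" "p * (1 - p) \<le> 1" using p by (auto simp: mult_le_one)
  hence "(\<Sum>j\<in>J. (c j)\<^sup>2 * (p * (1 - p)) ^ card (S j)) \<le> (\<Sum>j\<in>J. (c j)\<^sup>2)"
    by (intro sum_mono mult_left_le) (auto simp: power_le_one)
  thus ?thesis using expectation_Pi_pmf_square_sum_centered[OF assms] by simp
qed

lemma expectation_ER_square_add_le:
  fixes a b :: real
  shows "measure_pmf.expectation (ER n p) (\<lambda>G. (a * f G + b * g G)\<^sup>2) \<le>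
     2 * a\<^sup>2 * measure_pmf.expectation (ER n p) (\<lambda>G. (f G)\<^sup>2)
     + 2 * b\<^sup>2 * measure_pmf.expectation (ER n p) (\<lambda>G. (g G)\<^sup>2)"
proof -
  have "(a * f G + b * g G)\<^sup>2 \<le> 2 * a\<^sup>2 * (f G)\<^sup>2 + 2 * b\<^sup>2 * (g G)\<^sup>2" for G
    using zero_le_power2[of "a * f G - b * g G"] by (simp add: power2_eq_square algebra_simps)
  hence "measure_pmf.expectation (ER n p) (\<lambda>G. (a * f G + b * g G)\<^sup>2) \<le>
      measure_pmf.expectation (ER n p) (\<lambda>G. 2 * a\<^sup>2 * (f G)\<^sup>2 + 2 * b\<^sup>2 * (g G)\<^sup>2)"
    by (intro integral_mono) simp_all
  thus ?thesis by simp
qed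

lemma vpairs_eq_image_Sigma: "vpairs n = (\<lambda>(j, i). (i, j)) ` (SIGMA j:{..<n}. {..<j})"
  by (auto simp: vpairs_def image_iff)

lemma sum_vpairs: "(\<Sum>e\<in>vpairs n. f e) = (\<Sum>j<n. \<Sum>i<j. f (i, j))"
  unfolding vpairs_eq_image_Sigma by (subst sum.reindex) (auto simp: inj_on_def sum.Sigma prod.case_distrib)

lemma triples_eq_image_Sigma:
  "triples n = (\<lambda>(k, j, i). (i, j, k)) ` (SIGMA k:{..<n}. SIGMA j:{..<k}. {..<j})"
  by (auto simp: triples_def image_iff)

lemma sum_triples: "(\<Sum>t\<in>triples n. f t) = (\<Sum>k<n. \<Sum>j<k. \<Sum>i<j. f (i, j, k))"
  unfolding triples_eq_image_Sigma by (subst sum.reindex) (auto simp: inj_on_def sum.Sigma prod.case_distrib)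

lemma sum_lessThan_lessThan: "(\<Sum>j<n. \<Sum>i<j. h i) = (\<Sum>i<n. (real n - 1 - real i) * (h i :: real))"
  by (induction n) (simp_all add: sum.distrib[symmetric] algebra_simps)

lemma sum_triples_pair_sum:
  "(\<Sum>(i, j, k)\<in>triples n. g (i, j) + g (j, k) + g (i, k)) = (real n - 2) * (\<Sum>e\<in>vpairs n. (g e :: real))"
proof -
  have "(\<Sum>k<n. \<Sum>j<k. \<Sum>i<j. g (i, j) + g (j, k) + g (i, k)) = (real n - 2) * (\<Sum>j<n. \<Sum>i<j. g (i, j))"
  proof (induction n)
    case (Suc n)
    have "(\<Sum>j<n. \<Sum>i<j. g (j, n) + g (i, n)) = (\<Sum>j<n. real j * g (j, n)) + (\<Sum>i<n. (real n - 1 - real i) * g (i, n))"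
      by (simp add: sum.distrib sum_lessThan_lessThan[where h="\<lambda>i. g (i, n)"])
    also have "\<dots> = (real n - 1) * (\<Sum>i<n. g (i, n))"
      by (simp add: sum.distrib[symmetric] sum_distrib_left algebra_simps)
    finally show ?case using Suc by (simp add: sum.distrib algebra_simps)
  qed simp
  thus ?thesis by (simp add: sum_triples sum_vpairs)
qed

lemma real_card_vpairs: "real (card (vpairs n)) = real n * (real n - 1) / 2"
proof -
  have "real (card (vpairs n)) = (\<Sum>j<n. real j)"
    using sum_vpairs[of "\<lambda>_. 1 :: real" n] by simp
  also have "\<dots> = real n * (real n - 1) / 2"
    by (induction n) (auto simp: field_simps)
  finally show ?thesis .
qed

lemma real_card_triples: "real (card (triples n)) = real n * (real n - 1) * (real n - 2) / 6"
proof -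
  have "real (card (triples n)) = (\<Sum>k<n. \<Sum>j<k. real j)"
    using sum_triples[of "\<lambda>_. 1 :: real" n] by simp
  also have "\<dots> = real n * (real n - 1) * (real n - 2) / 6"
  proof (induction n)
    case (Suc n)
    have "(\<Sum>j<n. real j) = real n * (real n - 1) / 2" by (induction n) (auto simp: field_simps)
    thus ?case using Suc by (simp add: field_simps)
  qed simp
  finally show ?thesis .
qed

lemma card_triples: "card (triples n) = n choose 3"
proof -
  have "real (n choose 3) = real n * (real n - 1) * (real n - 2) / 6"
  proof (induction n)
    case (Suc n)
    have "real (n choose 2) = real n * (real n - 1) / 2"
      by (cases "n = 0") (auto simp: choose_two real_of_nat_div of_nat_diff field_simps)
    moreover have "Suc n choose 3 = (n choose 2) + (n choose 3)"
      by (simp add: numeral_3_eq_3 numeral_2_eq_2)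
    ultimately show ?case using Suc by (simp add: field_simps)
  qed simp
  thus ?thesis using real_card_triples[of n] by linarith
qed

lemma triples_nonempty:
  assumes "3 \<le> n" shows "triples n \<noteq> {}"
proof -
  have "(0, 1, 2) \<in> triples n" using assms by (simp add: triples_def)
  thus ?thesis by blast
qed

lemma card_triples_pos: "3 \<le> n \<Longrightarrow> 0 < real (card (triples n))"
  by (simp add: card_gt_0_iff triples_nonempty)

lemma three_card_triples: "3 * real (card (triples n)) = (real n - 2) * real (card (vpairs n))"
  by (simp add: real_card_triples real_card_vpairs field_simps)

lemma card_vpairs_eq:
  "3 \<le> n \<Longrightarrow> real (card (vpairs n)) = 3 * real (card (triples n)) / (real n - 2)"
  by (simp add: three_card_triples)

lemma card_triples_cube_bounds:
  assumes "3 \<le> n"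
  shows "(real n - 2) ^ 3 \<le> 6 * real (card (triples n))" "real (card (triples n)) \<le> (real n - 2) ^ 3"
proof -
  define y where "y = real n - 2"
  have y: "y \<ge> 1" using assms by (simp add: y_def)
  have m: "6 * real (card (triples n)) = (y + 2) * (y + 1) * y"
    by (simp add: real_card_triples y_def field_simps)
  have "y \<le> y * y" using mult_left_mono[OF y, of y] y by simp
  moreover have "(y + 2) * (y + 1) = y * y + 3 * y + 2" by (simp add: algebra_simps)
  ultimately have lo: "y * y \<le> (y + 2) * (y + 1)" and hi: "(y + 2) * (y + 1) \<le> 6 * (y * y)"
    using y by linarith+
  have "y * y * y \<le> (y + 2) * (y + 1) * y" "(y + 2) * (y + 1) * y \<le> 6 * (y * y) * y"
    using mult_right_mono[OF lo, of y] mult_right_mono[OF hi, of y] y by simp_all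
  thus "(real n - 2) ^ 3 \<le> 6 * real (card (triples n))" "real (card (triples n)) \<le> (real n - 2) ^ 3"
    unfolding y_def[symmetric] power3_eq_cube using m by linarith+
qed

lemma div_card_triples_le:
  assumes n: "3 \<le> n" and AB: "0 \<le> A" "0 \<le> B"
  shows "(A * (real n - 2) + B) / real (card (triples n)) \<le> 6 * (A + B) / (real n - 2)\<^sup>2"
proof -
  define y where "y = real n - 2"
  have y: "y \<ge> 1" using n by (simp add: y_def)
  have "y ^ 3 \<le> 6 * real (card (triples n))"
    using card_triples_cube_bounds(1)[OF n] by (simp add: y_def)
  moreover have "0 < y ^ 3" "0 < real (card (triples n))"
    using y card_triples_pos[OF n] by simp_all
  ultimately have "(A * y + B) / real (card (triples n)) \<le> (A * y + B) / (y ^ 3 / 6)"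
    using y AB by (intro divide_left_mono) auto
  also have "\<dots> = 6 * A / y\<^sup>2 + 6 * B / y ^ 3"
    using y by (simp add: field_simps eval_nat_numeral)
  also have "6 * B / y ^ 3 \<le> 6 * B / y\<^sup>2"
    using y AB by (intro divide_left_mono) (auto simp: eval_nat_numeral)
  finally show ?thesis by (simp add: y_def add_divide_distrib algebra_simps)
qed

section \<open>Decomposition of the triangle and connected-triple counts\<close>

definition triple_pattern :: "nat \<times> nat \<times> nat \<Rightarrow> nat \<Rightarrow> (nat \<times> nat) set" where
  "triple_pattern t r = (case t of (i, j, k) \<Rightarrow>
     [{(i, j), (j, k)}, {(j, k), (i, k)}, {(i, j), (i, k)}, {(i, j), (j, k), (i, k)}] ! r)"

lemma triple_pattern_subset: "t \<in> triples n \<Longrightarrow> r < 4 \<Longrightarrow> triple_pattern t r \<subseteq> vpairs n"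
  by (cases t) (auto simp: triple_pattern_def triples_def vpairs_def less_Suc_eq numeral_eq_Suc)

lemma card_triple_pattern:
  "(i, j, k) \<in> triples n \<Longrightarrow> r < 4 \<Longrightarrow> card (triple_pattern (i, j, k) r) = (if r = 3 then 3 else 2)"
  by (auto simp: triple_pattern_def triples_def less_Suc_eq numeral_eq_Suc)

lemma triple_pattern_inject:
  assumes t: "(i, j, k) \<in> triples n" "(i', j', k') \<in> triples n" and r: "r < 4" "r' < 4"
    and eq: "triple_pattern (i, j, k) r = triple_pattern (i', j', k') r'"
  shows "(i, j, k) = (i', j', k') \<and> r = r'"
proof -
  from t have ord: "i < j" "j < k" "i' < j'" "j' < k'" by (auto simp: triples_def)
  have "(r = 3) = (r' = 3)"
    using card_triple_pattern[OF t(1) r(1)] card_triple_pattern[OF t(2) r(2)] eq by (auto split: if_splits)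
  with r consider "r = 3" "r' = 3" | "r \<in> {0, 1, 2}" "r' \<in> {0, 1, 2}" by fastforce
  thus ?thesis
  proof cases
    case 1
    with eq have "{(i, j), (j, k), (i, k)} = {(i', j'), (j', k'), (i', k')}"
      by (simp add: triple_pattern_def numeral_eq_Suc)
    hence "(i, j) \<in> {(i', j'), (j', k'), (i', k')}" "(j, k) \<in> {(i', j'), (j', k'), (i', k')}"
       "(i', j') \<in> {(i, j), (j, k), (i, k)}" "(j', k') \<in> {(i, j), (j, k), (i, k)}"
      by (metis insertI1 insertI2)+
    thus ?thesis using ord 1 by auto
  next
    case 2
    thus ?thesis using eq ord by (auto simp: triple_pattern_def doubleton_eq_iff numeral_eq_Suc)
  qed
qed

lemma inj_on_triple_pattern: "inj_on (\<lambda>(t, r). triple_pattern t r) (triples n \<times> {..<4})"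
  by (rule inj_onI) (use triple_pattern_inject in fastforce)

definition edge_deviation :: "nat \<Rightarrow> real \<Rightarrow> (nat \<times> nat \<Rightarrow> bool) \<Rightarrow> real" where
  "edge_deviation n p G = (\<Sum>e\<in>vpairs n. centered p (G e))"

definition triangle_remainder :: "nat \<Rightarrow> real \<Rightarrow> (nat \<times> nat \<Rightarrow> bool) \<Rightarrow> real" where
  "triangle_remainder n p G =
     (\<Sum>t\<in>triples n. \<Sum>r<4. (if r = 3 then 1 else p) * (\<Prod>e\<in>triple_pattern t r. centered p (G e)))"

definition wedge_remainder :: "nat \<Rightarrow> real \<Rightarrow> (nat \<times> nat \<Rightarrow> bool) \<Rightarrow> real" where
  "wedge_remainder n p G = (\<Sum>t\<in>triples n. \<Sum>r<3. \<Prod>e\<in>triple_pattern t r. centered p (G e))"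

lemma edges_in_triple:
  "(i, j, k) \<in> triples n \<Longrightarrow> edges_in G i j k = of_bool (G (i, j)) + of_bool (G (j, k)) + of_bool (G (i, k))"
  by (auto simp: edges_in_def adj_def triples_def)

lemma real_card_triples_filter:
  "real (card {(i, j, k). (i, j, k) \<in> triples n \<and> P i j k}) = (\<Sum>(i, j, k)\<in>triples n. of_bool (P i j k))"
proof -
  have "{(i, j, k). (i, j, k) \<in> triples n \<and> P i j k} = {t \<in> triples n. case t of (i, j, k) \<Rightarrow> P i j k}"
    by auto
  thus ?thesis
    using sum.inter_filter[OF finite_triples, of "\<lambda>_. 1 :: real"] by (simp add: of_bool_def case_prod_unfold)
qed

lemma real_triangles_sum:
  "real (triangles n G) = (\<Sum>(i, j, k)\<in>triples n. of_bool (G (i, j)) * of_bool (G (j, k)) * of_bool (G (i, k)))"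
  unfolding triangles_def real_card_triples_filter
proof (intro sum.cong refl, clarify)
  fix i j k assume "(i, j, k) \<in> triples n"
  thus "of_bool (edges_in G i j k = 3) = (of_bool (G (i, j)) * of_bool (G (j, k)) * of_bool (G (i, k)) :: real)"
    by (cases "G (i, j)"; cases "G (j, k)"; cases "G (i, k)") (simp_all add: edges_in_triple)
qed

lemma real_conn_triples_sum:
  "real (conn_triples n G) = (\<Sum>(i, j, k)\<in>triples n. of_bool (G (i, j)) * of_bool (G (j, k)) +
       of_bool (G (j, k)) * of_bool (G (i, k)) + of_bool (G (i, j)) * of_bool (G (i, k)))"
  unfolding conn_triples_def triangles_def open_triples_def of_nat_add of_nat_mult
    real_card_triples_filter sum_distrib_left sum.distrib[symmetric]
proof (intro sum.cong refl, clarify)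
  fix i j k assume "(i, j, k) \<in> triples n"
  thus "real 3 * of_bool (edges_in G i j k = 3) + of_bool (edges_in G i j k = 2) =
      (of_bool (G (i, j)) * of_bool (G (j, k)) + of_bool (G (j, k)) * of_bool (G (i, k)) +
       of_bool (G (i, j)) * of_bool (G (i, k)) :: real)"
    by (cases "G (i, j)"; cases "G (j, k)"; cases "G (i, k)") (simp_all add: edges_in_triple)
qed

lemma sum_triple_pattern:
  assumes "(i, j, k) \<in> triples n"
  shows "(\<Sum>r<4. c r * (\<Prod>e\<in>triple_pattern (i, j, k) r. f e)) =
     c 0 * (f (i, j) * f (j, k)) + c 1 * (f (j, k) * f (i, k)) + c 2 * (f (i, j) * f (i, k))
     + c 3 * (f (i, j) * f (j, k) * f (i, k))"
  using assms by (simp add: numeral_eq_Suc triple_pattern_def triples_def algebra_simps)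

lemma real_triangles_decomp:
  "real (triangles n G) = real (card (triples n)) * p ^ 3 + p\<^sup>2 * (real n - 2) * edge_deviation n p G
     + triangle_remainder n p G"
proof -
  let ?x = "\<lambda>e. centered p (G e)"
  define L where "L t = (case t of (i, j, k) \<Rightarrow> ?x (i, j) + ?x (j, k) + ?x (i, k))" for t
  have L: "sum L (triples n) = (real n - 2) * edge_deviation n p G"
    unfolding L_def edge_deviation_def by (rule sum_triples_pair_sum)
  have "of_bool (G (i, j)) * of_bool (G (j, k)) * of_bool (G (i, k)) =
     p ^ 3 + p\<^sup>2 * L (i, j, k) +
     (\<Sum>r<4. (if r = 3 then 1 else p) * (\<Prod>e\<in>triple_pattern (i, j, k) r. ?x e))"
    if "(i, j, k) \<in> triples n" for i j k
    using that by (simp add: L_def sum_triple_pattern centered_def algebra_simps power2_eq_square power3_eq_cube)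
  hence "real (triangles n G) = (\<Sum>t\<in>triples n. p ^ 3 + p\<^sup>2 * L t +
     (\<Sum>r<4. (if r = 3 then 1 else p) * (\<Prod>e\<in>triple_pattern t r. ?x e)))"
    unfolding real_triangles_sum by (intro sum.cong refl) auto
  thus ?thesis
    by (simp add: sum.distrib sum_distrib_left[symmetric] L triangle_remainder_def)
qed

lemma real_conn_triples_decomp:
  "real (conn_triples n G) = real (card (triples n)) * (3 * p\<^sup>2) + 2 * p * (real n - 2) * edge_deviation n p G
     + wedge_remainder n p G"
proof -
  let ?x = "\<lambda>e. centered p (G e)"
  define L where "L t = (case t of (i, j, k) \<Rightarrow> ?x (i, j) + ?x (j, k) + ?x (i, k))" for t
  have L: "sum L (triples n) = (real n - 2) * edge_deviation n p G"
    unfolding L_def edge_deviation_def by (rule sum_triples_pair_sum)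
  have "of_bool (G (i, j)) * of_bool (G (j, k)) + of_bool (G (j, k)) * of_bool (G (i, k))
          + of_bool (G (i, j)) * of_bool (G (i, k)) =
     3 * p\<^sup>2 + 2 * p * L (i, j, k) +
     (\<Sum>r<3. \<Prod>e\<in>triple_pattern (i, j, k) r. ?x e)"
    if "(i, j, k) \<in> triples n" for i j k
    using that sum_triple_pattern[OF that, of "\<lambda>r. if r = 3 then 0 else 1" ?x]
    by (simp add: L_def centered_def algebra_simps power2_eq_square lessThan_Suc numeral_eq_Suc)
  hence "real (conn_triples n G) = (\<Sum>t\<in>triples n. 3 * p\<^sup>2 + 2 * p * L t +
     (\<Sum>r<3. \<Prod>e\<in>triple_pattern t r. ?x e))"
    unfolding real_conn_triples_sum by (intro sum.cong refl) auto
  thus ?thesis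
    by (simp add: sum.distrib sum_distrib_left[symmetric] L wedge_remainder_def)
qed

lemma expectation_edge_deviation_square:
  assumes "0 \<le> p" "p \<le> 1"
  shows "measure_pmf.expectation (ER n p) (\<lambda>G. (edge_deviation n p G)\<^sup>2) = real (card (vpairs n)) * (p * (1 - p))"
proof -
  have "edge_deviation n p G = (\<Sum>e\<in>vpairs n. 1 * (\<Prod>e'\<in>{e}. centered p (G e')))" for G
    by (simp add: edge_deviation_def)
  moreover have "measure_pmf.expectation (ER n p) (\<lambda>G. (\<Sum>e\<in>vpairs n. 1 * (\<Prod>e'\<in>{e}. centered p (G e')))\<^sup>2)
      = (\<Sum>e\<in>vpairs n. 1\<^sup>2 * (p * (1 - p)) ^ card {e})"
    unfolding ER_def by (rule expectation_Pi_pmf_square_sum_centered) (use assms in auto)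
  ultimately show ?thesis by simp
qed

lemma expectation_triangle_remainder_square_le:
  assumes "0 \<le> p" "p \<le> 1"
  shows "measure_pmf.expectation (ER n p) (\<lambda>G. (triangle_remainder n p G)\<^sup>2) \<le> 4 * real (card (triples n))"
proof -
  let ?J = "triples n \<times> {..<4 :: nat}"
  have "triangle_remainder n p G =
      (\<Sum>(t, r)\<in>?J. (if r = 3 then 1 else p) * (\<Prod>e\<in>triple_pattern t r. centered p (G e)))" for G
    by (simp add: triangle_remainder_def sum.cartesian_product)
  hence "measure_pmf.expectation (ER n p) (\<lambda>G. (triangle_remainder n p G)\<^sup>2) =
      measure_pmf.expectation (ER n p) (\<lambda>G. (\<Sum>x\<in>?J. (\<lambda>(t, r). if r = 3 then 1 else p) x *
         (\<Prod>e\<in>(\<lambda>(t, r). triple_pattern t r) x. centered p (G e)))\<^sup>2)"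
    by (simp add: case_prod_unfold)
  also have "\<dots> \<le> (\<Sum>x\<in>?J. ((\<lambda>(t, r). if r = 3 then 1 else p) x)\<^sup>2)"
  proof (unfold ER_def, rule expectation_Pi_pmf_square_sum_centered_le)
    show "(\<lambda>(t, r). triple_pattern t r) x \<subseteq> vpairs n" if "x \<in> ?J" for x
      using that by (cases x) (simp add: triple_pattern_subset)
  qed (use assms inj_on_triple_pattern in auto)
  also have "\<dots> \<le> (\<Sum>x\<in>?J. 1)"
    using assms by (intro sum_mono) (auto simp: power_le_one)
  also have "\<dots> = 4 * real (card (triples n))"
    by (simp add: card_cartesian_product)
  finally show ?thesis .
qed

lemma expectation_wedge_remainder_square_le:
  assumes "0 \<le> p" "p \<le> 1"
  shows "measure_pmf.expectation (ER n p) (\<lambda>G. (wedge_remainder n p G)\<^sup>2) \<le> 3 * real (card (triples n))"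
proof -
  let ?J = "triples n \<times> {..<3 :: nat}"
  have "wedge_remainder n p G = (\<Sum>x\<in>?J. 1 * (\<Prod>e\<in>(\<lambda>(t, r). triple_pattern t r) x. centered p (G e)))" for G
    by (simp add: wedge_remainder_def sum.cartesian_product case_prod_unfold)
  hence "measure_pmf.expectation (ER n p) (\<lambda>G. (wedge_remainder n p G)\<^sup>2) =
      measure_pmf.expectation (ER n p) (\<lambda>G. (\<Sum>x\<in>?J. 1 * (\<Prod>e\<in>(\<lambda>(t, r). triple_pattern t r) x. centered p (G e)))\<^sup>2)"
    by simp
  also have "\<dots> \<le> (\<Sum>x\<in>?J. 1\<^sup>2)"
  proof (unfold ER_def, rule expectation_Pi_pmf_square_sum_centered_le)
    show "inj_on (\<lambda>(t, r). triple_pattern t r) ?J"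
      by (rule inj_on_subset[OF inj_on_triple_pattern]) auto
    show "(\<lambda>(t, r). triple_pattern t r) x \<subseteq> vpairs n" if "x \<in> ?J" for x
      using that by (cases x) (simp add: triple_pattern_subset)
  qed (use assms in auto)
  also have "\<dots> = 3 * real (card (triples n))"
    by (simp add: card_cartesian_product)
  finally show ?thesis .
qed

section \<open>Central limit theorem for the number of edges\<close>

lemma isCont_cdf_std_normal: "isCont (cdf std_normal_distribution) x"
proof -
  have "emeasure std_normal_distribution {x} = 0"
    by (subst emeasure_density) (auto intro!: nn_integral_null_set)
  thus ?thesis
    by (simp add: finite_borel_measure.isCont_cdf[OF real_distribution.finite_borel_measure_M[OF real_dist_normal_dist]]
        measure_def)
qed

lemma distr_Pi_pmf_restrict:
  assumes K: "finite K" "K \<noteq> {}"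
  shows "distr (measure_pmf (Pi_pmf K d Q)) (PiM K (\<lambda>i. measure_pmf (Q i))) (\<lambda>f. restrict f K)
       = PiM K (\<lambda>i. measure_pmf (Q i))"
proof -
  let ?P = "measure_pmf (Pi_pmf K d Q)"
  have indep: "prob_space.indep_vars ?P (\<lambda>i. measure_pmf (Q i)) (\<lambda>i f. f i) K"
    using prob_space.indep_vars_compose2[OF measure_pmf.prob_space_axioms indep_vars_Pi_pmf[OF K(1)],
        of "\<lambda>_ x. x" "\<lambda>i. measure_pmf (Q i)" d Q]
    by simp
  have component: "distr ?P (measure_pmf (Q i)) (\<lambda>f. f i) = measure_pmf (Q i)" if "i \<in> K" for i
  proof -
    have "Q i = map_pmf (\<lambda>f. f i) (Pi_pmf K d Q)" using that K by (simp add: Pi_pmf_component)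
    thus ?thesis by (intro measure_eqI) (auto simp: emeasure_distr)
  qed
  have "distr ?P (PiM K (\<lambda>i. measure_pmf (Q i))) (\<lambda>f. \<lambda>i\<in>K. f i)
      = PiM K (\<lambda>i. distr ?P (measure_pmf (Q i)) (\<lambda>f. f i))"
    using prob_space.indep_vars_iff_distr_eq_PiM'[OF measure_pmf.prob_space_axioms K(2),
        where M'="\<lambda>i. measure_pmf (Q i)" and X="\<lambda>i f. f i"] indep
    by simp
  also have "\<dots> = PiM K (\<lambda>i. measure_pmf (Q i))"
    by (rule PiM_cong) (auto simp: component)
  finally show ?thesis by (simp add: restrict_def)
qed

(* The library's central limit theorem is about one i.i.d. sequence on one probability
   space; binomial laws are recovered by restricting it to finitely many coordinates. *)
locale bernoulli_sequence =
  fixes p :: real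
  assumes p: "0 < p" "p < 1"
begin

definition M :: "(nat \<Rightarrow> bool) measure" where
  "M = PiM UNIV (\<lambda>_. measure_pmf (bernoulli_pmf p))"

sublocale coins: product_prob_space "\<lambda>_::nat. measure_pmf (bernoulli_pmf p)" UNIV
  by unfold_locales

lemma prob_space_M: "prob_space M"
  unfolding M_def by (rule coins.P.prob_space_axioms)

lemma measurable_coordinate: "(\<lambda>\<omega>. \<omega> i) \<in> measurable M (measure_pmf (bernoulli_pmf p))"
  unfolding M_def by (rule measurable_component_singleton) simp

lemma distr_coordinate: "distr M (measure_pmf (bernoulli_pmf p)) (\<lambda>\<omega>. \<omega> i) = measure_pmf (bernoulli_pmf p)"
  unfolding M_def by (rule coins.PiM_component) simp

lemma integral_coordinate:
  "integral\<^sup>L M (\<lambda>\<omega>. f (\<omega> i)) = measure_pmf.expectation (bernoulli_pmf p) (f :: bool \<Rightarrow> real)"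
  using integral_distr[OF measurable_coordinate, of f i] by (simp add: distr_coordinate)

lemma integrable_coordinate: "integrable M (\<lambda>\<omega>. f (\<omega> i) :: real)"
proof -
  have "integrable (distr M (measure_pmf (bernoulli_pmf p)) (\<lambda>\<omega>. \<omega> i)) f"
    unfolding distr_coordinate by (rule integrable_measure_pmf_finite) simp
  thus ?thesis by (subst (asm) integrable_distr_eq[OF measurable_coordinate]) simp_all
qed

lemma indep_coordinates: "prob_space.indep_vars M (\<lambda>_. borel) (\<lambda>i \<omega>. of_bool (\<omega> i)) UNIV"
proof -
  have "distr M (PiM UNIV (\<lambda>_. measure_pmf (bernoulli_pmf p))) (\<lambda>\<omega>. \<lambda>i\<in>UNIV. \<omega> i) =
        PiM UNIV (\<lambda>i. distr M (measure_pmf (bernoulli_pmf p)) (\<lambda>\<omega>. \<omega> i))"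
    by (simp add: restrict_UNIV distr_coordinate) (simp add: M_def)
  hence "prob_space.indep_vars M (\<lambda>_. measure_pmf (bernoulli_pmf p)) (\<lambda>i \<omega>. \<omega> i) UNIV"
    by (subst prob_space.indep_vars_iff_distr_eq_PiM'[OF prob_space_M]) (auto simp: M_def)
  thus ?thesis
    by (rule prob_space.indep_vars_compose2[OF prob_space_M]) simp
qed

lemma clt:
  "weak_conv_m (\<lambda>k. distr M borel (\<lambda>\<omega>. (\<Sum>i<k. of_bool (\<omega> i) - p) / sqrt (real k * (p * (1 - p)))))
     std_normal_distribution"
proof -
  have var: "(sqrt (p * (1 - p)))\<^sup>2 = p * (1 - p)" using p by simp
  have "weak_conv_m (\<lambda>k. distr M borel (\<lambda>\<omega>. (\<Sum>i<k. of_bool (\<omega> i) - p) / sqrt (real k * (sqrt (p * (1 - p)))\<^sup>2)))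
     std_normal_distribution"
  proof (rule prob_space.central_limit_theorem[OF prob_space_M indep_coordinates])
    show "prob_space.expectation M (\<lambda>\<omega>. of_bool (\<omega> i)) = p" for i
      using p by (simp add: integral_coordinate)
    show "0 < sqrt (p * (1 - p))" using p by simp
    show "integrable M (\<lambda>\<omega>. (of_bool (\<omega> i) :: real)\<^sup>2)" for i
      by (rule integrable_coordinate[of "\<lambda>b. (of_bool b :: real)\<^sup>2"])
    show "prob_space.variance M (\<lambda>\<omega>. of_bool (\<omega> i)) = (sqrt (p * (1 - p)))\<^sup>2" for i
      using p integral_coordinate[of "\<lambda>b. (of_bool b - p)\<^sup>2" i]
      by (simp add: integral_coordinate var power2_eq_square algebra_simps)
    show "distr M borel (\<lambda>\<omega>. of_bool (\<omega> i) :: real) = distr (measure_pmf (bernoulli_pmf p)) borel of_bool" for i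
      using distr_distr[OF _ measurable_coordinate, of "of_bool :: bool \<Rightarrow> real" borel i]
      by (simp add: distr_coordinate comp_def)
  qed
  thus ?thesis by (simp only: var)
qed

lemma measure_restrict_eq_Pi_pmf:
  fixes g :: "(nat \<Rightarrow> bool) \<Rightarrow> real"
  assumes K: "finite K" "K \<noteq> {}" and g: "g \<in> borel_measurable (PiM K (\<lambda>_. measure_pmf (bernoulli_pmf p)))"
  shows "measure M {\<omega>\<in>space M. g (restrict \<omega> K) \<le> x} =
         measure_pmf.prob (Pi_pmf K False (\<lambda>_. bernoulli_pmf p)) {f. g (restrict f K) \<le> x}"
proof -
  let ?PiK = "PiM K (\<lambda>_. measure_pmf (bernoulli_pmf p))"
  let ?P = "measure_pmf (Pi_pmf K False (\<lambda>_. bernoulli_pmf p))"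
  define A where "A = {h\<in>space ?PiK. g h \<le> x}"
  have A: "A \<in> sets ?PiK" unfolding A_def using g by measurable
  have r1: "(\<lambda>\<omega>. restrict \<omega> K) \<in> measurable M ?PiK"
    unfolding M_def by (rule measurable_restrict_subset) simp
  have r2: "(\<lambda>\<omega>. restrict \<omega> K) \<in> measurable ?P ?PiK"
    by (simp add: space_PiM)
  have "measure M {\<omega>\<in>space M. g (restrict \<omega> K) \<le> x} = measure M ((\<lambda>\<omega>. restrict \<omega> K) -` A \<inter> space M)"
    by (intro arg_cong[where f="measure M"]) (auto simp: M_def space_PiM A_def)
  also have "\<dots> = measure (distr M ?PiK (\<lambda>\<omega>. restrict \<omega> K)) A"
    by (rule measure_distr[symmetric, OF r1 A])
  also have "distr M ?PiK (\<lambda>\<omega>. restrict \<omega> K) = distr ?P ?PiK (\<lambda>f. restrict f K)"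
    unfolding M_def coins.distr_PiM_restrict_finite[OF K(1) subset_UNIV] distr_Pi_pmf_restrict[OF K] ..
  also have "measure \<dots> A = measure ?P ((\<lambda>\<omega>. restrict \<omega> K) -` A \<inter> space ?P)"
    by (rule measure_distr[OF r2 A])
  also have "(\<lambda>\<omega>. restrict \<omega> K) -` A \<inter> space ?P = {f. g (restrict f K) \<le> x}"
    by (auto simp: space_PiM A_def)
  finally show ?thesis .
qed

end

lemma sum_centered_eq_card:
  "(\<Sum>i\<in>A. centered p (f i)) = real (card {i\<in>A. f i}) - real (card A) * p" if "finite A"
  using that sum.inter_filter[OF that, of "\<lambda>_. 1 :: real" f]
  by (simp add: centered_def sum_subtractf of_bool_def)

lemma binomial_clt:
  assumes p: "0 < p" "p < 1"
  shows "(\<lambda>k. measure_pmf.prob (binomial_pmf k p) {j. (real j - real k * p) / sqrt (real k * (p * (1 - p))) \<le> x})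
     \<longlonglongrightarrow> cdf std_normal_distribution x"
proof -
  interpret bernoulli_sequence p using p by unfold_locales
  define g where "g k h = (\<Sum>i<k. of_bool (h i) - p) / sqrt (real k * (p * (1 - p)))" for k and h :: "nat \<Rightarrow> bool"
  have "(\<lambda>k. cdf (distr M borel (\<lambda>\<omega>. g k \<omega>)) x) \<longlonglongrightarrow> cdf std_normal_distribution x"
    using clt isCont_cdf_std_normal unfolding weak_conv_m_def weak_conv_def g_def by blast
  moreover have "cdf (distr M borel (\<lambda>\<omega>. g k \<omega>)) x =
      measure_pmf.prob (binomial_pmf k p) {j. (real j - real k * p) / sqrt (real k * (p * (1 - p))) \<le> x}"
    if "k > 0" for k
  proof -
    let ?bern = "Pi_pmf {..<k} False (\<lambda>_. bernoulli_pmf p)"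
    have restrict: "g k (restrict \<omega> {..<k}) = g k \<omega>" for \<omega> by (simp add: g_def)
    have "g k \<in> borel_measurable M"
      unfolding g_def M_def by measurable
    hence "cdf (distr M borel (\<lambda>\<omega>. g k \<omega>)) x = measure M {\<omega>\<in>space M. g k (restrict \<omega> {..<k}) \<le> x}"
      unfolding cdf_def restrict by (subst measure_distr) (auto intro!: arg_cong[where f="measure M"])
    also have "\<dots> = measure_pmf.prob ?bern {f. g k (restrict f {..<k}) \<le> x}"
      using that by (intro measure_restrict_eq_Pi_pmf) (auto simp: g_def)
    also have "\<dots> = measure_pmf.prob (map_pmf (\<lambda>f. card {i\<in>{..<k}. f i}) ?bern)
        {j. (real j - real k * p) / sqrt (real k * (p * (1 - p))) \<le> x}"
      by (simp add: restrict g_def sum_centered_eq_card[of "{..<k}", unfolded centered_def])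
    also have "map_pmf (\<lambda>f. card {i\<in>{..<k}. f i}) ?bern = binomial_pmf k p"
      by (rule binomial_pmf_altdef'[symmetric]) (use p in auto)
    finally show ?thesis .
  qed
  hence "\<forall>\<^sub>F k in sequentially. cdf (distr M borel (\<lambda>\<omega>. g k \<omega>)) x =
      measure_pmf.prob (binomial_pmf k p) {j. (real j - real k * p) / sqrt (real k * (p * (1 - p))) \<le> x}"
    by (intro eventually_sequentiallyI[of 1]) auto
  ultimately show ?thesis by (rule Lim_transform_eventually)
qed

lemma edge_deviation_clt:
  assumes p: "0 < p" "p < 1"
  shows "(\<lambda>n. measure_pmf.prob (ER n p)
           {G. edge_deviation n p G / sqrt (real (card (vpairs n)) * (p * (1 - p))) \<le> x})
     \<longlonglongrightarrow> cdf std_normal_distribution x"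
proof -
  let ?F = "\<lambda>k. measure_pmf.prob (binomial_pmf k p) {j. (real j - real k * p) / sqrt (real k * (p * (1 - p))) \<le> x}"
  have "measure_pmf.prob (ER n p) {G. edge_deviation n p G / sqrt (real (card (vpairs n)) * (p * (1 - p))) \<le> x}
      = ?F (card (vpairs n))" for n
  proof -
    let ?card = "\<lambda>G. card {e\<in>vpairs n. G e}"
    have "measure_pmf.prob (ER n p) {G. edge_deviation n p G / sqrt (real (card (vpairs n)) * (p * (1 - p))) \<le> x}
        = measure_pmf.prob (map_pmf ?card (ER n p))
            {j. (real j - real (card (vpairs n)) * p) / sqrt (real (card (vpairs n)) * (p * (1 - p))) \<le> x}"
      by (simp add: edge_deviation_def sum_centered_eq_card vimage_def)
    also have "map_pmf ?card (ER n p) = binomial_pmf (card (vpairs n)) p"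
      unfolding ER_def by (rule binomial_pmf_altdef'[symmetric]) (use p in auto)
    finally show ?thesis .
  qed
  moreover have "filterlim (\<lambda>n. card (vpairs n)) at_top sequentially"
  proof (rule filterlim_at_top_mono[OF filterlim_ident eventually_sequentiallyI[of 3]])
    fix n :: nat assume "3 \<le> n"
    hence "real n \<le> real (card (vpairs n))"
      by (simp add: real_card_vpairs field_simps)
    thus "n \<le> card (vpairs n)" by linarith
  qed
  ultimately show ?thesis
    using filterlim_compose[OF binomial_clt[OF p]] by simp
qed

section \<open>Convergence to zero in probability\<close>

definition tendsto_prob_zero :: "(nat \<Rightarrow> 'a pmf) \<Rightarrow> (nat \<Rightarrow> 'a \<Rightarrow> real) \<Rightarrow> bool" where
  "tendsto_prob_zero P X \<longleftrightarrow> (\<forall>e>0. (\<lambda>n. measure_pmf.prob (P n) {\<omega>. e < \<bar>X n \<omega>\<bar>}) \<longlonglongrightarrow> 0)"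

lemma tendsto_prob_zeroD:
  "tendsto_prob_zero P X \<Longrightarrow> e > 0 \<Longrightarrow> (\<lambda>n. measure_pmf.prob (P n) {\<omega>. e < \<bar>X n \<omega>\<bar>}) \<longlonglongrightarrow> 0"
  by (simp add: tendsto_prob_zero_def)

lemma tendsto_prob_zero_sandwich:
  assumes "\<And>e. e > 0 \<Longrightarrow> \<exists>b. b \<longlonglongrightarrow> 0 \<and> (\<forall>n. measure_pmf.prob (P n) {\<omega>. e < \<bar>X n \<omega>\<bar>} \<le> b n)"
  shows "tendsto_prob_zero P X"
  unfolding tendsto_prob_zero_def
proof (intro allI impI)
  fix e :: real assume "e > 0"
  from assms[OF this] obtain b
    where b: "b \<longlonglongrightarrow> 0" "\<forall>n. measure_pmf.prob (P n) {\<omega>. e < \<bar>X n \<omega>\<bar>} \<le> b n"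
    by (elim exE conjE)
  show "(\<lambda>n. measure_pmf.prob (P n) {\<omega>. e < \<bar>X n \<omega>\<bar>}) \<longlonglongrightarrow> 0"
  proof (rule tendsto_sandwich[of "\<lambda>_. 0" _ _ b])
    show "\<forall>\<^sub>F n in sequentially. measure_pmf.prob (P n) {\<omega>. e < \<bar>X n \<omega>\<bar>} \<le> b n"
      using b(2) by (intro always_eventually)
  qed (use b(1) in simp_all)
qed

lemma measure_pmf_prob_Un_le:
  "A \<subseteq> B \<union> C \<Longrightarrow> measure_pmf.prob P A \<le> measure_pmf.prob P B + measure_pmf.prob P C"
  by (rule order_trans[OF measure_pmf.finite_measure_mono measure_Un_le]) auto

lemma tendsto_prob_zero_add:
  assumes X: "tendsto_prob_zero P X" and Y: "tendsto_prob_zero P Y"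
  shows "tendsto_prob_zero P (\<lambda>n \<omega>. X n \<omega> + Y n \<omega>)"
proof (rule tendsto_prob_zero_sandwich)
  fix e :: real assume e: "e > 0"
  let ?b = "\<lambda>n. measure_pmf.prob (P n) {\<omega>. e / 2 < \<bar>X n \<omega>\<bar>} + measure_pmf.prob (P n) {\<omega>. e / 2 < \<bar>Y n \<omega>\<bar>}"
  have "\<forall>n. measure_pmf.prob (P n) {\<omega>. e < \<bar>X n \<omega> + Y n \<omega>\<bar>} \<le> ?b n"
    by (intro allI measure_pmf_prob_Un_le) auto
  moreover have "?b \<longlonglongrightarrow> 0"
    using tendsto_add[OF tendsto_prob_zeroD[OF X half_gt_zero[OF e]] tendsto_prob_zeroD[OF Y half_gt_zero[OF e]]]
    by simp
  ultimately show "\<exists>b. b \<longlonglongrightarrow> 0 \<and> (\<forall>n. measure_pmf.prob (P n) {\<omega>. e < \<bar>X n \<omega> + Y n \<omega>\<bar>} \<le> b n)"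
    by blast
qed

lemma tendsto_prob_zero_dominated:
  assumes B: "tendsto_prob_zero P B"
    and bad: "(\<lambda>n. measure_pmf.prob (P n) {\<omega>. \<not> \<bar>X n \<omega>\<bar> \<le> B n \<omega>}) \<longlonglongrightarrow> 0"
  shows "tendsto_prob_zero P X"
proof (rule tendsto_prob_zero_sandwich)
  fix e :: real assume e: "e > 0"
  let ?b = "\<lambda>n. measure_pmf.prob (P n) {\<omega>. e < \<bar>B n \<omega>\<bar>} + measure_pmf.prob (P n) {\<omega>. \<not> \<bar>X n \<omega>\<bar> \<le> B n \<omega>}"
  have "\<forall>n. measure_pmf.prob (P n) {\<omega>. e < \<bar>X n \<omega>\<bar>} \<le> ?b n"
    by (intro allI measure_pmf_prob_Un_le) auto
  moreover have "?b \<longlonglongrightarrow> 0"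
    using tendsto_add[OF tendsto_prob_zeroD[OF B e] bad] by simp
  ultimately show "\<exists>b. b \<longlonglongrightarrow> 0 \<and> (\<forall>n. measure_pmf.prob (P n) {\<omega>. e < \<bar>X n \<omega>\<bar>} \<le> b n)"
    by blast
qed

lemma tendsto_prob_zero_expectation_abs:
  assumes int: "\<And>n. integrable (measure_pmf (P n)) (X n)"
    and lim: "(\<lambda>n. measure_pmf.expectation (P n) (\<lambda>\<omega>. \<bar>X n \<omega>\<bar>)) \<longlonglongrightarrow> 0"
  shows "tendsto_prob_zero P X"
proof (rule tendsto_prob_zero_sandwich)
  fix e :: real assume e: "e > 0"
  have "measure_pmf.prob (P n) {\<omega>. e < \<bar>X n \<omega>\<bar>} \<le> measure_pmf.expectation (P n) (\<lambda>\<omega>. \<bar>X n \<omega>\<bar>) / e" for n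
  proof -
    have "measure_pmf.prob (P n) {\<omega>. e < \<bar>X n \<omega>\<bar>} \<le> measure_pmf.prob (P n) {\<omega> \<in> UNIV. e \<le> \<bar>X n \<omega>\<bar>}"
      by (rule measure_pmf.finite_measure_mono) auto
    also have "\<dots> \<le> measure_pmf.expectation (P n) (\<lambda>\<omega>. \<bar>X n \<omega>\<bar>) / e"
      using integral_Markov_inequality_measure[of "measure_pmf (P n)" "\<lambda>\<omega>. \<bar>X n \<omega>\<bar>" UNIV e] int e
      by simp
    finally show ?thesis .
  qed
  moreover have "(\<lambda>n. measure_pmf.expectation (P n) (\<lambda>\<omega>. \<bar>X n \<omega>\<bar>) / e) \<longlonglongrightarrow> 0"
    using tendsto_divide[OF lim tendsto_const[of e]] e by simp
  ultimately show "\<exists>b. b \<longlonglongrightarrow> 0 \<and> (\<forall>n. measure_pmf.prob (P n) {\<omega>. e < \<bar>X n \<omega>\<bar>} \<le> b n)"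
    by blast
qed

lemma tendsto_prob_zero_expectation_square:
  assumes int: "\<And>n. integrable (measure_pmf (P n)) (\<lambda>\<omega>. (X n \<omega>)\<^sup>2)"
    and lim: "(\<lambda>n. measure_pmf.expectation (P n) (\<lambda>\<omega>. (X n \<omega>)\<^sup>2)) \<longlonglongrightarrow> 0"
  shows "tendsto_prob_zero P X"
proof -
  have "tendsto_prob_zero P (\<lambda>n \<omega>. (X n \<omega>)\<^sup>2)"
    using int lim by (intro tendsto_prob_zero_expectation_abs) simp_all
  moreover have "{\<omega>. e < \<bar>X n \<omega>\<bar>} = {\<omega>. e\<^sup>2 < \<bar>(X n \<omega>)\<^sup>2\<bar>}" if "e > 0" for e n
    using that by (auto simp: abs_le_square_iff[symmetric] not_le[symmetric])
  ultimately show ?thesis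
    unfolding tendsto_prob_zero_def by simp
qed

lemma slutsky_pmf:
  fixes Y Z :: "nat \<Rightarrow> 'a \<Rightarrow> real"
  assumes cont: "\<And>x. isCont F x"
    and Z: "\<And>x. (\<lambda>n. measure_pmf.prob (P n) {\<omega>. Z n \<omega> \<le> x}) \<longlonglongrightarrow> F x"
    and YZ: "tendsto_prob_zero P (\<lambda>n \<omega>. Y n \<omega> - Z n \<omega>)"
  shows "(\<lambda>n. measure_pmf.prob (P n) {\<omega>. Y n \<omega> \<le> x}) \<longlonglongrightarrow> F x"
proof (rule tendstoI)
  fix r :: real assume r: "r > 0"
  obtain d where d: "d > 0" "\<And>y. dist y x < d \<Longrightarrow> dist (F y) (F x) < r / 3"
    using cont[of x] r unfolding continuous_at_eps_delta by (metis divide_pos_pos zero_less_numeral)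
  define e where "e = d / 2"
  have e: "e > 0" "dist (F (x + e)) (F x) < r / 3" "dist (F (x - e)) (F x) < r / 3"
    using d by (auto simp: e_def dist_real_def)
  let ?pr = "\<lambda>n. measure_pmf.prob (P n)"
  have "\<forall>\<^sub>F n in sequentially. dist (?pr n {\<omega>. Z n \<omega> \<le> x + e}) (F (x + e)) < r / 3"
       "\<forall>\<^sub>F n in sequentially. dist (?pr n {\<omega>. Z n \<omega> \<le> x - e}) (F (x - e)) < r / 3"
       "\<forall>\<^sub>F n in sequentially. dist (?pr n {\<omega>. e < \<bar>Y n \<omega> - Z n \<omega>\<bar>}) 0 < r / 3"
    using tendstoD[OF Z, of "r / 3"] tendstoD[OF tendsto_prob_zeroD[OF YZ e(1)], of "r / 3"] r by auto
  thus "\<forall>\<^sub>F n in sequentially. dist (?pr n {\<omega>. Y n \<omega> \<le> x}) (F x) < r"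
  proof eventually_elim
    case (elim n)
    have "?pr n {\<omega>. Y n \<omega> \<le> x} \<le> ?pr n {\<omega>. Z n \<omega> \<le> x + e} + ?pr n {\<omega>. e < \<bar>Y n \<omega> - Z n \<omega>\<bar>}"
      "?pr n {\<omega>. Z n \<omega> \<le> x - e} \<le> ?pr n {\<omega>. Y n \<omega> \<le> x} + ?pr n {\<omega>. e < \<bar>Y n \<omega> - Z n \<omega>\<bar>}"
      by (intro measure_pmf_prob_Un_le; auto)+
    thus ?case using elim e(2,3) unfolding dist_real_def by arith
  qed
qed

lemma tendsto_zero_if_le_div:
  fixes f :: "nat \<Rightarrow> real"
  assumes "\<And>n. 3 \<le> n \<Longrightarrow> 0 \<le> f n" and "\<And>n. 3 \<le> n \<Longrightarrow> f n \<le> K / (real n - 2)"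
  shows "f \<longlonglongrightarrow> 0"
proof (rule tendsto_sandwich[of "\<lambda>_. 0" _ _ "\<lambda>n. K / (real n - 2)"])
  have "filterlim (\<lambda>n. - 2 + real n) at_top sequentially"
    by (rule filterlim_tendsto_add_at_top[OF tendsto_const filterlim_real_sequentially])
  hence "filterlim (\<lambda>n. real n - 2) at_infinity sequentially"
    by (intro filterlim_at_top_imp_at_infinity) simp
  thus "(\<lambda>n. K / (real n - 2)) \<longlonglongrightarrow> 0"
    by (rule tendsto_divide_0[OF tendsto_const])
qed (use assms in \<open>auto intro: eventually_sequentiallyI[of 3]\<close>)

lemma div_square_le_div: "1 \<le> y \<Longrightarrow> 0 \<le> K \<Longrightarrow> K / y\<^sup>2 \<le> K / (y :: real)"
  by (intro divide_left_mono) (auto simp: power2_eq_square)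

lemma tendsto_prob_zero_ER_expectation_abs:
  assumes "\<And>n. 3 \<le> n \<Longrightarrow> measure_pmf.expectation (ER n p) (\<lambda>G. \<bar>X n G\<bar>) \<le> K / (real n - 2)"
  shows "tendsto_prob_zero (\<lambda>n. ER n p) X"
  by (intro tendsto_prob_zero_expectation_abs tendsto_zero_if_le_div[where K = K] assms) simp_all

lemma tendsto_prob_zero_ER_expectation_square:
  assumes "\<And>n. 3 \<le> n \<Longrightarrow> measure_pmf.expectation (ER n p) (\<lambda>G. (X n G)\<^sup>2) \<le> K / (real n - 2)"
  shows "tendsto_prob_zero (\<lambda>n. ER n p) X"
  by (intro tendsto_prob_zero_expectation_square tendsto_zero_if_le_div[where K = K] assms) simp_all

lemma tendsto_prob_zero_ER_of_square_le:
  assumes K: "0 \<le> K" and E: "\<And>n. 3 \<le> n \<Longrightarrow> measure_pmf.expectation (ER n p) (\<lambda>G. (X n G)\<^sup>2) \<le> K / (real n - 2)\<^sup>2"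
  shows "tendsto_prob_zero (\<lambda>n. ER n p) X"
proof (rule tendsto_prob_zero_ER_expectation_square[where K = K])
  fix n :: nat assume n: "3 \<le> n"
  show "measure_pmf.expectation (ER n p) (\<lambda>G. (X n G)\<^sup>2) \<le> K / (real n - 2)"
    by (rule order_trans[OF E[OF n] div_square_le_div]) (use n K in auto)
qed

section \<open>Linearisation of the logarithm of the clustering coefficient\<close>

definition triangle_excess :: "nat \<Rightarrow> real \<Rightarrow> (nat \<times> nat \<Rightarrow> bool) \<Rightarrow> real" where
  "triangle_excess n p G =
     ((real n - 2) * edge_deviation n p G / p + triangle_remainder n p G / p ^ 3) / real (card (triples n))"

definition conn_excess :: "nat \<Rightarrow> real \<Rightarrow> (nat \<times> nat \<Rightarrow> bool) \<Rightarrow> real" where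
  "conn_excess n p G =
     (2 * (real n - 2) * edge_deviation n p G / (3 * p) + wedge_remainder n p G / (3 * p\<^sup>2)) / real (card (triples n))"

definition excess_remainder :: "nat \<Rightarrow> real \<Rightarrow> (nat \<times> nat \<Rightarrow> bool) \<Rightarrow> real" where
  "excess_remainder n p G =
     (triangle_remainder n p G / p ^ 3 - wedge_remainder n p G / (3 * p\<^sup>2)) / real (card (triples n))"

lemma real_triangles_eq_excess:
  "3 \<le> n \<Longrightarrow> 0 < p \<Longrightarrow> real (triangles n G) = real (card (triples n)) * p ^ 3 * (1 + triangle_excess n p G)"
  using triples_nonempty[of n]
  by (simp add: real_triangles_decomp[of n G p] triangle_excess_def field_simps power2_eq_square power3_eq_cube)

lemma real_conn_triples_eq_excess:
  "3 \<le> n \<Longrightarrow> 0 < p \<Longrightarrow> real (conn_triples n G) = 3 * real (card (triples n)) * p\<^sup>2 * (1 + conn_excess n p G)"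
  using triples_nonempty[of n]
  by (simp add: real_conn_triples_decomp[of n G p] conn_excess_def field_simps power2_eq_square)

lemma clustering_eq_excess:
  assumes "3 \<le> n" "0 < p"
  shows "clustering n G = p * (1 + triangle_excess n p G) / (1 + conn_excess n p G)"
proof -
  let ?c = "3 * real (card (triples n)) * p\<^sup>2"
  have "?c \<noteq> 0" using triples_nonempty[OF assms(1)] assms(2) by simp
  moreover have "clustering n G = (?c * (p * (1 + triangle_excess n p G))) / (?c * (1 + conn_excess n p G))"
    unfolding clustering_def real_triangles_eq_excess[OF assms] real_conn_triples_eq_excess[OF assms]
    by (simp add: power2_eq_square power3_eq_cube algebra_simps)
  ultimately show ?thesis by simp
qed

lemma triangle_excess_minus_conn_excess:
  assumes "3 \<le> n" "0 < p"
  shows "triangle_excess n p G - conn_excess n p G =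
    (real n - 2) * edge_deviation n p G / (3 * real (card (triples n)) * p) + excess_remainder n p G"
  using triples_nonempty[OF assms(1)] assms(2)
  by (simp add: triangle_excess_def conn_excess_def excess_remainder_def field_simps power2_eq_square power3_eq_cube)

(* The first summand is the variance of the linear term (n - 2) D / (3 m p); the second
   is of lower order. *)
lemma sigma_sq_eq:
  assumes n: "3 \<le> n" and p: "0 < p"
  shows "sigma_sq n p = p * (1 - p) / real (card (triples n)) *
           ((real n - 2) / (3 * p\<^sup>2) + (1 - p) * (3 + p) / (3 * p ^ 4))"
proof -
  define y where "y = real n - 2"
  define m where "m = real (n choose 3)"
  have "y > 0" "m > 0" using n by (auto simp: y_def m_def)
  hence "(1 / m ^ 2) * ((3 * y * m * p * (1 - p) * (p^4 + p^2 * (1 + p - 2 * p^2) / (3 * y))) / p^6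
       + (3 * y * m * p * (1 - p) * (4 * p^2 + p * (1 - p) / y)) / (9 * p^4)
       - 2 * (3 * y * m * p * (1 - p) * (2 * p^3 + p^2 * (1 - p) / y)) / (3 * p^5))
     = (p * (1 - p) / m) * (y / (3 * p\<^sup>2) + (1 - p) * (3 + p) / (3 * p ^ 4))"
    using p by (simp add: field_simps) algebra
  thus ?thesis
    unfolding sigma_sq_def Sig11_def Sig12_def Sig22_def Sig_pref_def card_triples y_def m_def .
qed

lemma sigma_sq_ge:
  assumes n: "3 \<le> n" and p: "0 < p" "p < 1"
  shows "p * (1 - p) * (real n - 2) / (3 * p\<^sup>2 * real (card (triples n))) \<le> sigma_sq n p"
proof -
  have "0 \<le> p * (1 - p) / real (card (triples n)) * ((1 - p) * (3 + p) / (3 * p ^ 4))"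
    using p by simp
  moreover have "p * (1 - p) / real (card (triples n)) * ((real n - 2) / (3 * p\<^sup>2))
      = p * (1 - p) * (real n - 2) / (3 * p\<^sup>2 * real (card (triples n)))"
    by simp
  ultimately show ?thesis unfolding sigma_sq_eq[OF n p(1)] distrib_left by linarith
qed

lemma sigma_sq_pos: "3 \<le> n \<Longrightarrow> 0 < p \<Longrightarrow> p < 1 \<Longrightarrow> 0 < sigma_sq n p"
  by (rule less_le_trans[OF _ sigma_sq_ge]) (use card_triples_pos in auto)

lemma inverse_sqrt_sigma_sq_le:
  assumes n: "3 \<le> n" and p: "0 < p" "p < 1"
  shows "1 / sqrt (sigma_sq n p) \<le> p * (real n - 2) * sqrt (3 / (p * (1 - p)))"
proof -
  define y where "y = real n - 2"
  have y: "y \<ge> 1" using n by (simp add: y_def)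
  have m: "real (card (triples n)) > 0" by (rule card_triples_pos[OF n])
  have "p * (1 - p) / (3 * p\<^sup>2 * y\<^sup>2) = p * (1 - p) * y / (3 * p\<^sup>2 * y ^ 3)"
    using y by (simp add: eval_nat_numeral)
  also have "\<dots> \<le> p * (1 - p) * y / (3 * p\<^sup>2 * real (card (triples n)))"
    using card_triples_cube_bounds(2)[OF n] p y m by (intro divide_left_mono mult_left_mono) (auto simp: y_def)
  also have "\<dots> \<le> sigma_sq n p"
    using sigma_sq_ge[OF n p] by (simp add: y_def)
  finally have "sqrt (p * (1 - p) / (3 * p\<^sup>2 * y\<^sup>2)) \<le> sqrt (sigma_sq n p)"
    by (rule real_sqrt_le_mono)
  moreover have "0 < p * (1 - p) / (3 * p\<^sup>2 * y\<^sup>2)" using p y by simp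
  ultimately have "1 / sqrt (sigma_sq n p) \<le> 1 / sqrt (p * (1 - p) / (3 * p\<^sup>2 * y\<^sup>2))"
    by (intro divide_left_mono mult_pos_pos) auto
  also have "\<dots> = p * y * sqrt (3 / (p * (1 - p)))"
    using p y by (simp add: real_sqrt_divide real_sqrt_mult field_simps)
  finally show ?thesis by (simp add: y_def)
qed

definition dev_mismatch :: "nat \<Rightarrow> real \<Rightarrow> real" where
  "dev_mismatch n p = (real n - 2) / (3 * real (card (triples n)) * p * sqrt (sigma_sq n p))
     - 1 / sqrt (real (card (vpairs n)) * (p * (1 - p)))"

definition linearization_error_bound :: "nat \<Rightarrow> real \<Rightarrow> (nat \<times> nat \<Rightarrow> bool) \<Rightarrow> real" where
  "linearization_error_bound n p G =
     2 * (triangle_excess n p G)\<^sup>2 / sqrt (sigma_sq n p) + 2 * (conn_excess n p G)\<^sup>2 / sqrt (sigma_sq n p)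
     + \<bar>dev_mismatch n p * edge_deviation n p G\<bar> + \<bar>excess_remainder n p G / sqrt (sigma_sq n p)\<bar>"

lemma log_clustering_linearization:
  assumes n: "3 \<le> n" and p: "0 < p" "p < 1"
    and u: "\<bar>triangle_excess n p G\<bar> \<le> 1/2" and v: "\<bar>conn_excess n p G\<bar> \<le> 1/2"
  shows "\<bar>(ln (clustering n G) - ln p) / sqrt (sigma_sq n p)
            - edge_deviation n p G / sqrt (real (card (vpairs n)) * (p * (1 - p)))\<bar>
         \<le> linearization_error_bound n p G"
proof -
  define u v D R s where "u = triangle_excess n p G" and "v = conn_excess n p G"
    and "D = edge_deviation n p G" and "R = excess_remainder n p G" and "s = sqrt (sigma_sq n p)"
  have s: "s > 0" using sigma_sq_pos[OF n p] by (simp add: s_def)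
  define m where "m = real (card (triples n))"
  have m: "m > 0" unfolding m_def by (rule card_triples_pos[OF n])
  have "1 + u > 0" "1 + v > 0" using u v by (auto simp: u_def v_def abs_le_iff)
  hence "ln (clustering n G) - ln p = ln (1 + u) - ln (1 + v)"
    using p by (simp add: clustering_eq_excess[OF n p(1)] ln_div ln_mult u_def v_def)
  also have "\<dots> = ((ln (1 + u) - u) - (ln (1 + v) - v)) + (u - v)" by simp
  also have "u - v = (real n - 2) * D / (3 * m * p) + R"
    unfolding u_def v_def D_def R_def m_def by (rule triangle_excess_minus_conn_excess[OF n p(1)])
  finally have log_eq: "ln (clustering n G) - ln p
      = ((ln (1 + u) - u) - (ln (1 + v) - v)) + ((real n - 2) * D / (3 * m * p) + R)" .
  have split: "(ln (clustering n G) - ln p) / s - D / sqrt (real (card (vpairs n)) * (p * (1 - p)))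
      = ((ln (1 + u) - u) - (ln (1 + v) - v)) / s + dev_mismatch n p * D + R / s"
    unfolding log_eq dev_mismatch_def s_def[symmetric] m_def[symmetric] using s m p by (simp add: field_simps)
  moreover have "\<bar>ln (1 + u) - u\<bar> \<le> 2 * u\<^sup>2" "\<bar>ln (1 + v) - v\<bar> \<le> 2 * v\<^sup>2"
    using u v by (simp_all add: u_def v_def abs_ln_one_plus_x_minus_x_bound)
  hence log_bound: "\<bar>((ln (1 + u) - u) - (ln (1 + v) - v)) / s\<bar> \<le> 2 * u\<^sup>2 / s + 2 * v\<^sup>2 / s"
    using s by (simp add: abs_divide add_divide_distrib[symmetric] divide_right_mono)
  have "\<bar>a + b + c\<bar> \<le> \<bar>a\<bar> + \<bar>b\<bar> + \<bar>c\<bar>" for a b c :: real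
    by (rule order_trans[OF abs_triangle_ineq add_right_mono[OF abs_triangle_ineq]])
  thus ?thesis
    unfolding linearization_error_bound_def u_def[symmetric] v_def[symmetric] D_def[symmetric] R_def[symmetric]
      s_def[symmetric] split
    by (rule order_trans[OF _ add_right_mono[OF add_right_mono[OF log_bound]]])
qed

section \<open>The linearisation error vanishes in probability\<close>

lemma expectation_triangle_excess_square_le:
  assumes n: "3 \<le> n" and p: "0 < p" "p < 1"
  shows "measure_pmf.expectation (ER n p) (\<lambda>G. (triangle_excess n p G)\<^sup>2)
    \<le> 6 * (6 * (1 - p) / p + 8 / p ^ 6) / (real n - 2)\<^sup>2"
proof -
  define m where "m = real (card (triples n))"
  have m: "m > 0" unfolding m_def by (rule card_triples_pos[OF n])
  let ?E = "\<lambda>f. measure_pmf.expectation (ER n p) (\<lambda>G. (f G)\<^sup>2)"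
  have "?E (triangle_excess n p) = ?E (\<lambda>G. (real n - 2) / (m * p) * edge_deviation n p G
      + 1 / (m * p ^ 3) * triangle_remainder n p G)"
    by (simp add: triangle_excess_def m_def add_divide_distrib mult.commute)
  also have "\<dots> \<le> 2 * ((real n - 2) / (m * p))\<^sup>2 * (real (card (vpairs n)) * (p * (1 - p)))
      + 2 * (1 / (m * p ^ 3))\<^sup>2 * (4 * m)"
    using expectation_triangle_remainder_square_le[of p n] p
    by (intro order_trans[OF expectation_ER_square_add_le] add_mono mult_left_mono)
       (simp_all add: expectation_edge_deviation_square m_def)
  also have "\<dots> = (6 * (1 - p) / p * (real n - 2) + 8 / p ^ 6) / m"
    using m p n unfolding card_vpairs_eq[OF n] m_def[symmetric]
    by (simp add: field_simps eval_nat_numeral)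
  also have "\<dots> \<le> 6 * (6 * (1 - p) / p + 8 / p ^ 6) / (real n - 2)\<^sup>2"
    unfolding m_def using p by (intro div_card_triples_le[OF n]) auto
  finally show ?thesis .
qed

lemma expectation_conn_excess_square_le:
  assumes n: "3 \<le> n" and p: "0 < p" "p < 1"
  shows "measure_pmf.expectation (ER n p) (\<lambda>G. (conn_excess n p G)\<^sup>2)
    \<le> 6 * (8 * (1 - p) / (3 * p) + 2 / (3 * p ^ 4)) / (real n - 2)\<^sup>2"
proof -
  define m where "m = real (card (triples n))"
  have m: "m > 0" unfolding m_def by (rule card_triples_pos[OF n])
  let ?E = "\<lambda>f. measure_pmf.expectation (ER n p) (\<lambda>G. (f G)\<^sup>2)"
  have "?E (conn_excess n p) = ?E (\<lambda>G. 2 * (real n - 2) / (3 * m * p) * edge_deviation n p G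
      + 1 / (3 * m * p\<^sup>2) * wedge_remainder n p G)"
    by (simp add: conn_excess_def m_def add_divide_distrib mult.commute mult.left_commute)
  also have "\<dots> \<le> 2 * (2 * (real n - 2) / (3 * m * p))\<^sup>2 * (real (card (vpairs n)) * (p * (1 - p)))
      + 2 * (1 / (3 * m * p\<^sup>2))\<^sup>2 * (3 * m)"
    using expectation_wedge_remainder_square_le[of p n] p
    by (intro order_trans[OF expectation_ER_square_add_le] add_mono mult_left_mono)
       (simp_all add: expectation_edge_deviation_square m_def)
  also have "\<dots> = (8 * (1 - p) / (3 * p) * (real n - 2) + 2 / (3 * p ^ 4)) / m"
    using m p n unfolding card_vpairs_eq[OF n] m_def[symmetric]
    by (simp add: field_simps eval_nat_numeral)
  also have "\<dots> \<le> 6 * (8 * (1 - p) / (3 * p) + 2 / (3 * p ^ 4)) / (real n - 2)\<^sup>2"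
    unfolding m_def using p by (intro div_card_triples_le[OF n]) auto
  finally show ?thesis .
qed

lemma expectation_excess_remainder_square_le:
  assumes n: "3 \<le> n" and p: "0 < p" "p < 1"
  shows "measure_pmf.expectation (ER n p) (\<lambda>G. (excess_remainder n p G)\<^sup>2)
    \<le> (8 / p ^ 6 + 2 / (3 * p ^ 4)) / real (card (triples n))"
proof -
  define m where "m = real (card (triples n))"
  have m: "m > 0" unfolding m_def by (rule card_triples_pos[OF n])
  let ?E = "\<lambda>f. measure_pmf.expectation (ER n p) (\<lambda>G. (f G)\<^sup>2)"
  have "?E (excess_remainder n p) = ?E (\<lambda>G. 1 / (m * p ^ 3) * triangle_remainder n p G
      + (- 1 / (3 * m * p\<^sup>2)) * wedge_remainder n p G)"
    by (simp add: excess_remainder_def m_def diff_divide_distrib mult.commute mult.left_commute)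
  also have "\<dots> \<le> 2 * (1 / (m * p ^ 3))\<^sup>2 * (4 * m) + 2 * (- 1 / (3 * m * p\<^sup>2))\<^sup>2 * (3 * m)"
    using expectation_triangle_remainder_square_le[of p n] expectation_wedge_remainder_square_le[of p n] p
    by (intro order_trans[OF expectation_ER_square_add_le] add_mono mult_left_mono) (simp_all add: m_def)
  also have "\<dots> = (8 / p ^ 6 + 2 / (3 * p ^ 4)) / m"
    using m p by (simp add: field_simps eval_nat_numeral)
  finally show ?thesis by (simp add: m_def)
qed

lemma dev_mismatch_square_le:
  assumes n: "3 \<le> n" and p: "0 < p" "p < 1"
  shows "(dev_mismatch n p)\<^sup>2 * (real (card (vpairs n)) * (p * (1 - p))) \<le> (1 - p) * (3 + p) / (p\<^sup>2 * (real n - 2))"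
proof -
  define y m N q s g where "y = real n - 2" and "m = real (card (triples n))"
    and "N = real (card (vpairs n))" and "q = p * (1 - p)" and "s = sqrt (sigma_sq n p)"
    and "g = 3 * (1 - p) * (3 + p) / p\<^sup>2"
  have y: "y \<ge> 1" using n by (simp add: y_def)
  have m: "m > 0" unfolding m_def by (rule card_triples_pos[OF n])
  have q: "q > 0" using p by (simp add: q_def)
  have g: "g \<ge> 0" using p by (simp add: g_def)
  have N: "y * N = 3 * m" using three_card_triples[of n] by (simp add: y_def N_def m_def)
  have N0: "N > 0" using zero_less_mult_pos[of y N] N m y by simp
  have s: "s > 0" using sigma_sq_pos[OF n p] by (simp add: s_def)
  have s2: "s\<^sup>2 = q / m * (y / (3 * p\<^sup>2) + (1 - p) * (3 + p) / (3 * p ^ 4))"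
    using sigma_sq_pos[OF n p] sigma_sq_eq[OF n p(1)] by (simp add: s_def q_def m_def y_def)
  define r where "r = y * sqrt (N * q) / (3 * m * p * s)"
  have r0: "r > 0" using y m q s p N0 by (simp add: r_def)
  have "(dev_mismatch n p)\<^sup>2 * (N * q) = (dev_mismatch n p * sqrt (N * q))\<^sup>2"
    using N0 q by (simp add: power_mult_distrib)
  also have "dev_mismatch n p * sqrt (N * q) = r - 1"
    using N0 q by (simp add: dev_mismatch_def r_def y_def[symmetric] m_def[symmetric] N_def[symmetric]
        q_def[symmetric] s_def[symmetric] left_diff_distrib)
  finally have lhs: "(dev_mismatch n p)\<^sup>2 * (N * q) = (r - 1)\<^sup>2" .
  have "(sqrt (N * q))\<^sup>2 = N * q" using N0 q by simp
  hence "r\<^sup>2 = y * (y * N) * q / (9 * m\<^sup>2 * p\<^sup>2 * s\<^sup>2)"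
    by (simp add: r_def power_mult_distrib power_divide mult_ac power2_eq_square)
  also have "\<dots> = (3 * y) * (m * q) / ((3 * y + g) * (m * q))"
  proof -
    have "9 * m\<^sup>2 * p\<^sup>2 * s\<^sup>2 = (3 * y + g) * (m * q)"
      unfolding s2 g_def using m p by (simp add: field_simps eval_nat_numeral)
    thus ?thesis unfolding N by (simp add: mult_ac)
  qed
  also have "\<dots> = 3 * y / (3 * y + g)" using m q by simp
  finally have r2: "r\<^sup>2 = 3 * y / (3 * y + g)" .
  have "r\<^sup>2 \<le> 1\<^sup>2" unfolding r2 using y g by simp
  hence "r \<le> 1" by (rule power2_le_imp_le) simp
  hence "(r - 1)\<^sup>2 \<le> 1 - r\<^sup>2" using r0 by (simp add: power2_eq_square algebra_simps)
  also have "1 - r\<^sup>2 = g / (3 * y + g)" unfolding r2 using y g by (simp add: field_simps)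
  also have "\<dots> \<le> g / (3 * y)" using y g by (intro divide_left_mono) auto
  also have "\<dots> = (1 - p) * (3 + p) / (p\<^sup>2 * (real n - 2))" using y p by (simp add: g_def y_def field_simps)
  finally show ?thesis using lhs by (simp add: N_def q_def)
qed

lemma tendsto_prob_zero_ER_square_div_sigma:
  assumes p: "0 < p" "p < 1" and K: "0 \<le> K"
    and E: "\<And>n. 3 \<le> n \<Longrightarrow> measure_pmf.expectation (ER n p) (\<lambda>G. (X n G)\<^sup>2) \<le> K / (real n - 2)\<^sup>2"
  shows "tendsto_prob_zero (\<lambda>n. ER n p) (\<lambda>n G. 2 * (X n G)\<^sup>2 / sqrt (sigma_sq n p))"
proof (rule tendsto_prob_zero_ER_expectation_abs)
  fix n :: nat assume n: "3 \<le> n"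
  define y where "y = real n - 2"
  have y: "y \<ge> 1" using n by (simp add: y_def)
  have s: "sigma_sq n p > 0" using sigma_sq_pos[OF n p] .
  have "measure_pmf.expectation (ER n p) (\<lambda>G. \<bar>2 * (X n G)\<^sup>2 / sqrt (sigma_sq n p)\<bar>)
      = 2 * measure_pmf.expectation (ER n p) (\<lambda>G. (X n G)\<^sup>2) * (1 / sqrt (sigma_sq n p))"
    using s by simp
  also have "\<dots> \<le> 2 * (K / y\<^sup>2) * (p * y * sqrt (3 / (p * (1 - p))))"
    using E[OF n] inverse_sqrt_sigma_sq_le[OF n p] s K y
    by (intro mult_mono mult_left_mono) (auto simp: y_def)
  also have "\<dots> = 2 * K * p * sqrt (3 / (p * (1 - p))) / y"
    using y by (simp add: field_simps power2_eq_square)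
  finally show "measure_pmf.expectation (ER n p) (\<lambda>G. \<bar>2 * (X n G)\<^sup>2 / sqrt (sigma_sq n p)\<bar>)
      \<le> 2 * K * p * sqrt (3 / (p * (1 - p))) / (real n - 2)"
    by (simp add: y_def)
qed

lemma dev_mismatch_tendsto_prob_zero:
  assumes p: "0 < p" "p < 1"
  shows "tendsto_prob_zero (\<lambda>n. ER n p) (\<lambda>n G. \<bar>dev_mismatch n p * edge_deviation n p G\<bar>)"
proof (rule tendsto_prob_zero_ER_expectation_square)
  fix n :: nat assume n: "3 \<le> n"
  have "measure_pmf.expectation (ER n p) (\<lambda>G. \<bar>dev_mismatch n p * edge_deviation n p G\<bar>\<^sup>2)
      = (dev_mismatch n p)\<^sup>2 * (real (card (vpairs n)) * (p * (1 - p)))"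
    using p by (simp add: power_mult_distrib expectation_edge_deviation_square)
  also have "\<dots> \<le> (1 - p) * (3 + p) / (p\<^sup>2 * (real n - 2))"
    by (rule dev_mismatch_square_le[OF n p])
  finally show "measure_pmf.expectation (ER n p) (\<lambda>G. \<bar>dev_mismatch n p * edge_deviation n p G\<bar>\<^sup>2)
      \<le> (1 - p) * (3 + p) / p\<^sup>2 / (real n - 2)"
    by simp
qed

lemma excess_remainder_tendsto_prob_zero:
  assumes p: "0 < p" "p < 1"
  shows "tendsto_prob_zero (\<lambda>n. ER n p) (\<lambda>n G. \<bar>excess_remainder n p G / sqrt (sigma_sq n p)\<bar>)"
proof (rule tendsto_prob_zero_ER_expectation_square)
  fix n :: nat assume n: "3 \<le> n"
  define m where "m = real (card (triples n))"
  have m: "m > 0" unfolding m_def by (rule card_triples_pos[OF n])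
  define C where "C = 8 / p ^ 6 + 2 / (3 * p ^ 4)"
  have s: "p * (1 - p) * (real n - 2) / (3 * p\<^sup>2 * m) \<le> sigma_sq n p"
    using sigma_sq_ge[OF n p] by (simp add: m_def)
  have pos: "0 < p * (1 - p) * (real n - 2) / (3 * p\<^sup>2 * m)" using n p m by simp
  have "measure_pmf.expectation (ER n p) (\<lambda>G. \<bar>excess_remainder n p G / sqrt (sigma_sq n p)\<bar>\<^sup>2)
      = measure_pmf.expectation (ER n p) (\<lambda>G. (excess_remainder n p G)\<^sup>2) / sigma_sq n p"
    using sigma_sq_pos[OF n p] by (simp add: power_divide)
  also have "\<dots> \<le> (C / m) / (p * (1 - p) * (real n - 2) / (3 * p\<^sup>2 * m))"
    using expectation_excess_remainder_square_le[OF n p] s pos p m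
    by (intro frac_le) (auto simp: C_def m_def)
  also have "\<dots> = 3 * p\<^sup>2 * C / (p * (1 - p)) / (real n - 2)"
    using m p n by (simp add: field_simps)
  finally show "measure_pmf.expectation (ER n p) (\<lambda>G. \<bar>excess_remainder n p G / sqrt (sigma_sq n p)\<bar>\<^sup>2)
      \<le> 3 * p\<^sup>2 * C / (p * (1 - p)) / (real n - 2)" .
qed

lemma log_clustering_linearization_tendsto_prob_zero:
  assumes p: "0 < p" "p < 1"
  shows "tendsto_prob_zero (\<lambda>n. ER n p) (\<lambda>n G. (ln (clustering n G) - ln p) / sqrt (sigma_sq n p)
           - edge_deviation n p G / sqrt (real (card (vpairs n)) * (p * (1 - p))))"
proof (rule tendsto_prob_zero_dominated)
  have u: "tendsto_prob_zero (\<lambda>n. ER n p) (\<lambda>n. triangle_excess n p)"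
    by (rule tendsto_prob_zero_ER_of_square_le[OF _ expectation_triangle_excess_square_le[OF _ p]]) (use p in auto)
  have v: "tendsto_prob_zero (\<lambda>n. ER n p) (\<lambda>n. conn_excess n p)"
    by (rule tendsto_prob_zero_ER_of_square_le[OF _ expectation_conn_excess_square_le[OF _ p]]) (use p in auto)
  have "tendsto_prob_zero (\<lambda>n. ER n p) (\<lambda>n G. 2 * (triangle_excess n p G)\<^sup>2 / sqrt (sigma_sq n p))"
    by (rule tendsto_prob_zero_ER_square_div_sigma[OF p _ expectation_triangle_excess_square_le[OF _ p]])
       (use p in auto)
  moreover have "tendsto_prob_zero (\<lambda>n. ER n p) (\<lambda>n G. 2 * (conn_excess n p G)\<^sup>2 / sqrt (sigma_sq n p))"
    by (rule tendsto_prob_zero_ER_square_div_sigma[OF p _ expectation_conn_excess_square_le[OF _ p]])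
       (use p in auto)
  ultimately show "tendsto_prob_zero (\<lambda>n. ER n p) (\<lambda>n. linearization_error_bound n p)"
    unfolding linearization_error_bound_def
    by (intro tendsto_prob_zero_add dev_mismatch_tendsto_prob_zero excess_remainder_tendsto_prob_zero p)
  let ?bad = "\<lambda>n. measure_pmf.prob (ER n p) {G. 1/2 < \<bar>triangle_excess n p G\<bar>}
      + measure_pmf.prob (ER n p) {G. 1/2 < \<bar>conn_excess n p G\<bar>}"
  show "(\<lambda>n. measure_pmf.prob (ER n p) {G. \<not> \<bar>(ln (clustering n G) - ln p) / sqrt (sigma_sq n p)
          - edge_deviation n p G / sqrt (real (card (vpairs n)) * (p * (1 - p)))\<bar>
        \<le> linearization_error_bound n p G}) \<longlonglongrightarrow> 0"
  proof (rule tendsto_sandwich[of "\<lambda>_. 0" _ _ ?bad])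
    show "\<forall>\<^sub>F n in sequentially. measure_pmf.prob (ER n p) {G. \<not> \<bar>(ln (clustering n G) - ln p) / sqrt (sigma_sq n p)
          - edge_deviation n p G / sqrt (real (card (vpairs n)) * (p * (1 - p)))\<bar>
        \<le> linearization_error_bound n p G} \<le> ?bad n"
      using log_clustering_linearization[OF _ p]
      by (intro eventually_sequentiallyI[of 3] measure_pmf_prob_Un_le) force
    show "?bad \<longlonglongrightarrow> 0"
      using tendsto_add[OF tendsto_prob_zeroD[OF u half_gt_zero[OF zero_less_one]]
          tendsto_prob_zeroD[OF v half_gt_zero[OF zero_less_one]]] by simp
  qed simp_all
qed

theorem theorem1:
  fixes p :: real
  assumes "0 < p" and "p < 1"
  shows "weak_conv_m
           (\<lambda>n. distr (measure_pmf (ER n p)) borel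
                  (\<lambda>G. (ln (clustering n G) - ln p) / sqrt (sigma_sq n p)))
           std_normal_distribution"
  unfolding weak_conv_m_def weak_conv_def
proof (intro allI impI)
  fix x :: real
  have "cdf (distr (measure_pmf (ER n p)) borel (\<lambda>G. (ln (clustering n G) - ln p) / sqrt (sigma_sq n p))) x
      = measure_pmf.prob (ER n p) {G. (ln (clustering n G) - ln p) / sqrt (sigma_sq n p) \<le> x}" for n
    unfolding cdf_def by (subst measure_distr) (auto simp: vimage_def)
  moreover have "(\<lambda>n. measure_pmf.prob (ER n p) {G. (ln (clustering n G) - ln p) / sqrt (sigma_sq n p) \<le> x})
      \<longlonglongrightarrow> cdf std_normal_distribution x"
    using assms
    by (intro slutsky_pmf[OF isCont_cdf_std_normal edge_deviation_clt log_clustering_linearization_tendsto_prob_zero])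
  ultimately show "(\<lambda>n. cdf (distr (measure_pmf (ER n p)) borel
      (\<lambda>G. (ln (clustering n G) - ln p) / sqrt (sigma_sq n p))) x) \<longlonglongrightarrow> cdf std_normal_distribution x"
    by simp
qed

end
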